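(* Let $u_o>0$, $\alpha_1,\alpha_2\in\mathbb{R}$, and let $\boldsymbol{u}(x,t)=(u_1,u_2)^T$ be a smooth $\mathbb{C}^2$-valued function. Fix $z\in\mathbb{C}\setminus\{0\}$ and put $k=\frac12\left(z-\frac{u_o^2}{z}\right)$, $\lambda=\frac12\left(z+\frac{u_o^2}{z}\right)$. Suppose $\boldsymbol{\nu}_1(x,t)$ and $\boldsymbol{\nu}_2(x,t)$ are any two $\mathbb{C}^3$-valued solutions of the adjoint Lax system $$\tilde{\boldsymbol{\varphi}}_x=\tilde{\boldsymbol{X}}\tilde{\boldsymbol{\varphi}},\qquad \tilde{\boldsymbol{\varphi}}_t=\tilde{\boldsymbol{T}}\tilde{\boldsymbol{\varphi}}.$$ Then $$\boldsymbol{\nu}(x,t)=e^{ih_2(z,x,t)}\left[\boldsymbol{\nu}_1(x,t)\times\boldsymbol{\nu}_2(x,t)\right]$$ is a solution of the Lax system $\boldsymbol{\varphi}_x=\boldsymbol{X}\boldsymbol{\varphi}$, $\boldsymbol{\varphi}_t=\boldsymbol{T}\boldsymbol{\varphi}$.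
   Context: Notation. $\times$ denotes the (bilinear, unconjugated) cross product on $\mathbb{C}^3$, $\dagger$ denotes the conjugate transpose, and $^*$ denotes complex conjugation. Matrices. Set $$\boldsymbol{U}=\begin{pmatrix}0&-\boldsymbol{u}^\dagger\\ \boldsymbol{u}&0_{2\times2}\end{pmatrix},\qquad \boldsymbol{\sigma}=\mathrm{diag}(1,-1,-1).$$ Lax pair (here $\boldsymbol{U}_x=\partial_x\boldsymbol{U}$, etc.): $$\boldsymbol{X}=-ik\boldsymbol{\sigma}+\boldsymbol{U},$$ $$\boldsymbol{T}=\alpha_1\left[2ik^2\boldsymbol{\sigma}-2k\boldsymbol{U}+i\boldsymbol{\sigma}\left(\boldsymbol{U}^2+u_o^2-\boldsymbol{U}_x\right)\right]+\alpha_2\left[-4ik^3\boldsymbol{\sigma}+4k^2\boldsymbol{U}+2ik\boldsymbol{\sigma}\left(\boldsymbol{U}_x-\boldsymbol{U}^2\right)-\boldsymbol{U}\boldsymbol{U}_x+\boldsymbol{U}_x\boldsymbol{U}-\boldsymbol{U}_{xx}+2\boldsymbol{U}^3\right].$$ Adjoint Lax pair: $$\tilde{\boldsymbol{X}}=ik\boldsymbol{\sigma}+\boldsymbol{U}^*,$$ $$\tilde{\boldsymbol{T}}=\alpha_1\left[-2ik^2\boldsymbol{\sigma}-2k\boldsymbol{U}^*-i\boldsymbol{\sigma}\left((\boldsymbol{U}^* )^2+u_o^2-\boldsymbol{U}_x^*\right)\right]+\alpha_2\left[4ik^3\boldsymbol{\sigma}+4k^2\boldsymbol{U}^*-2ik\boldsymbol{\sigma}\left(\boldsymbol{U}_x^*-(\boldsymbol{U}^*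 )^2\right)+\boldsymbol{U}_x^*\boldsymbol{U}^*-\boldsymbol{U}^*\boldsymbol{U}_x^*-\boldsymbol{U}_{xx}^*+2(\boldsymbol{U}^* )^3\right].$$ Phase function: $$h_2(z,x,t)=kx-\left[\alpha_1(k^2+\lambda^2)-4\alpha_2k^3\right]t.$$ *)

theory Defs
  imports "HOL-Analysis.Analysis"
begin

definition ccross :: "complex^3 \<Rightarrow> complex^3 \<Rightarrow> complex^3" where
  "ccross a b = vector [a$2 * b$3 - a$3 * b$2, a$3 * b$1 - a$1 * b$3, a$1 * b$2 - a$2 * b$1]"

definition vsc :: "complex \<Rightarrow> complex^3 \<Rightarrow> complex^3" where
  "vsc c v = (\<chi> i. c * v$i)"

definition msc :: "complex \<Rightarrow> complex^3^3 \<Rightarrow> complex^3^3" where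
  "msc c A = (\<chi> i j. c * A$i$j)"

definition mcnj :: "complex^3^3 \<Rightarrow> complex^3^3" where
  "mcnj A = (\<chi> i j. cnj (A$i$j))"

definition sigma :: "complex^3^3" where
  "sigma = (\<chi> i j. if i = j then (if i = 1 then 1 else -1) else 0)"

text \<open>The matrix U = [[0, -u^dagger],[u, 0]] built from u = (u1,u2).\<close>
definition Umat :: "complex^2 \<Rightarrow> complex^3^3" where
  "Umat u = (\<chi> i j.
      if i = 1 \<and> j = 2 then - cnj (u$1)
      else if i = 1 \<and> j = 3 then - cnj (u$2)
      else if i = 2 \<and> j = 1 then u$1
      else if i = 3 \<and> j = 1 then u$2
      else 0)"

definition Xmat :: "complex \<Rightarrow> complex^3^3 \<Rightarrow> complex^3^3" where
  "Xmat k U = msc (-\<i> * k) sigma + U"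

definition Tmat :: "real \<Rightarrow> real \<Rightarrow> real \<Rightarrow> complex \<Rightarrow> complex^3^3 \<Rightarrow> complex^3^3 \<Rightarrow> complex^3^3
                     \<Rightarrow> complex^3^3" where
  "Tmat a1 a2 uo k U Ux Uxx =
     msc (complex_of_real a1)
       (msc (2 * \<i> * k^2) sigma - msc (2 * k) U
        + msc \<i> (sigma ** (U ** U + mat (complex_of_real (uo^2)) - Ux)))
   + msc (complex_of_real a2)
       (msc (-4 * \<i> * k^3) sigma + msc (4 * k^2) U
        + msc (2 * \<i> * k) (sigma ** (Ux - U ** U))
        - U ** Ux + Ux ** U - Uxx + msc 2 (U ** U ** U))"

definition Xadj :: "complex \<Rightarrow> complex^3^3 \<Rightarrow> complex^3^3" where
  "Xadj k U = msc (\<i> * k) sigma + mcnj U"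

definition Tadj :: "real \<Rightarrow> real \<Rightarrow> real \<Rightarrow> complex \<Rightarrow> complex^3^3 \<Rightarrow> complex^3^3 \<Rightarrow> complex^3^3
                     \<Rightarrow> complex^3^3" where
  "Tadj a1 a2 uo k U Ux Uxx =
     (let Us = mcnj U; Uxs = mcnj Ux; Uxxs = mcnj Uxx in
     msc (complex_of_real a1)
       (msc (-2 * \<i> * k^2) sigma - msc (2 * k) Us
        - msc \<i> (sigma ** (Us ** Us + mat (complex_of_real (uo^2)) - Uxs)))
   + msc (complex_of_real a2)
       (msc (4 * \<i> * k^3) sigma + msc (4 * k^2) Us
        - msc (2 * \<i> * k) (sigma ** (Uxs - Us ** Us))
        + Uxs ** Us - Us ** Uxs - Uxxs + msc 2 (Us ** Us ** Us)))"

definition h2 :: "real \<Rightarrow> real \<Rightarrow> complex \<Rightarrow> complex \<Rightarrow> real \<Rightarrow> real \<Rightarrow> complex" where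
  "h2 a1 a2 k lam x t = k * of_real x - (of_real a1 * (k^2 + lam^2) - 4 * of_real a2 * k^3) * of_real t"

end

theory Submission
  imports Defs
begin

text \<open>For every matrix \<open>B\<close>, \<open>B a \<times> b + a \<times> B b = (trace B - B\<^sup>T) (a \<times> b)\<close>.
  Hence the cross product of two solutions of \<open>\<nu>' = B \<nu>\<close> solves
  \<open>w' = (trace B - B\<^sup>T) w\<close>, and the phase factor \<open>exp (i h\<^sub>2)\<close> is chosen so that its
  derivative cancels the trace term (for \<open>T\<close> this uses \<open>\<lambda>\<^sup>2 = k\<^sup>2 + u\<^sub>o\<^sup>2\<close>), leaving
  \<open>w' = -B\<^sup>T w\<close>. The Lax matrices \<open>X\<close>, \<open>T\<close> are the negative transposes of the adjoint
  ones because \<open>(U\<^sup>*)\<^sup>T = U\<^sup>\<dagger> = -U\<close>; this holds for arbitrary \<open>U, U\<^sub>x, U\<^sub>x\<^sub>x\<close>.\<close>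

lemma bounded_bilinear_ccross: "bounded_bilinear ccross"
  unfolding bilinear_conv_bounded_bilinear[symmetric] bilinear_def linear_iff vec_eq_iff
  by (simp add: forall_3 ccross_def vector_scaleR_component scaleR_conv_of_real[where 'a=complex]
      algebra_simps)

lemma bounded_bilinear_vsc: "bounded_bilinear vsc"
  unfolding bilinear_conv_bounded_bilinear[symmetric] bilinear_def linear_iff vec_eq_iff
  by (simp add: vsc_def vector_scaleR_component scaleR_conv_of_real[where 'a=complex] algebra_simps)

lemma ccross_matrix_derivation:
  "ccross (B *v a) b + ccross a (B *v b) = vsc (trace B) (ccross a b) - transpose B *v ccross a b"
  by (simp add: vec_eq_iff forall_3 ccross_def vsc_def matrix_vector_mult_def sum_3 transpose_def
      trace_def algebra_simps)

lemma has_vector_derivative_phase_ccross: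
  fixes f g :: "real \<Rightarrow> complex^3" and E :: "real \<Rightarrow> complex" and B :: "complex^3^3"
  assumes E: "(E has_vector_derivative - trace B * E x) (at x)"
    and f: "(f has_vector_derivative B *v f x) (at x)"
    and g: "(g has_vector_derivative B *v g x) (at x)"
  shows "((\<lambda>y. vsc (E y) (ccross (f y) (g y))) has_vector_derivative
           - transpose B *v vsc (E x) (ccross (f x) (g x))) (at x)"
proof -
  define c where "c = ccross (f x) (g x)"
  have "ccross (f x) (B *v g x) + ccross (B *v f x) (g x) = vsc (trace B) c - transpose B *v c"
    unfolding c_def by (subst add.commute) (rule ccross_matrix_derivation)
  with bounded_bilinear.has_vector_derivative[OF bounded_bilinear_ccross f g]
  have "((\<lambda>y. ccross (f y) (g y)) has_vector_derivative vsc (trace B) c - transpose B *v c) (at x)"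
    by (simp only:)
  from bounded_bilinear.has_vector_derivative[OF bounded_bilinear_vsc E this]
  have "((\<lambda>y. vsc (E y) (ccross (f y) (g y))) has_vector_derivative
          vsc (E x) (vsc (trace B) c - transpose B *v c) + vsc (- trace B * E x) c) (at x)"
    by (simp only: c_def)
  moreover have "vsc (E x) (vsc (trace B) c - transpose B *v c) + vsc (- trace B * E x) c
      = - transpose B *v vsc (E x) c"
    by (simp add: vec_eq_iff vsc_def matrix_vector_mult_def sum_distrib_left sum_negf algebra_simps)
  ultimately show ?thesis
    unfolding c_def by (simp only:)
qed

lemma has_vector_derivative_exp_h2_x:
  "((\<lambda>y. exp (\<i> * h2 a1 a2 k lam y t)) has_vector_derivative
     \<i> * k * exp (\<i> * h2 a1 a2 k lam x t)) (at x)"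
proof -
  have "((\<lambda>y. \<i> * h2 a1 a2 k lam y t) has_vector_derivative \<i> * k) (at x)"
    unfolding h2_def by (rule derivative_eq_intros refl | simp)+
  from field_vector_diff_chain_at[OF this DERIV_exp] show ?thesis
    by (simp add: o_def)
qed

lemma has_vector_derivative_exp_h2_t:
  "((\<lambda>s. exp (\<i> * h2 a1 a2 k lam x s)) has_vector_derivative
     - \<i> * (of_real a1 * (k^2 + lam^2) - 4 * of_real a2 * k^3) * exp (\<i> * h2 a1 a2 k lam x t)) (at t)"
proof -
  have "((\<lambda>s. \<i> * h2 a1 a2 k lam x s) has_vector_derivative
          - \<i> * (of_real a1 * (k^2 + lam^2) - 4 * of_real a2 * k^3)) (at t)"
    unfolding h2_def by (rule derivative_eq_intros refl | simp add: algebra_simps)+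
  from field_vector_diff_chain_at[OF this DERIV_exp] show ?thesis
    by (simp add: o_def)
qed

lemma Xmat_eq_neg_transpose_Xadj: "Xmat k (Umat u) = - transpose (Xadj k (Umat u))"
  by (simp add: vec_eq_iff forall_3 Xmat_def Xadj_def Umat_def mcnj_def msc_def sigma_def transpose_def)

lemma trace_Xadj: "trace (Xadj k (Umat u)) = - \<i> * k"
  by (simp add: trace_def sum_3 Xadj_def Umat_def mcnj_def msc_def sigma_def)

lemma Tmat_eq_neg_transpose_Tadj:
  "Tmat a1 a2 uo k (Umat u) (Umat v) (Umat w) = - transpose (Tadj a1 a2 uo k (Umat u) (Umat v) (Umat w))"
  by (simp add: vec_eq_iff forall_3 Tmat_def Tadj_def Let_def Umat_def mcnj_def msc_def sigma_def
      matrix_matrix_mult_def mat_def sum_3 transpose_def algebra_simps)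

lemma trace_Tadj:
  "trace (Tadj a1 a2 uo k (Umat u) (Umat v) (Umat w))
     = \<i> * (of_real a1 * (2 * k^2 + of_real (uo^2)) - 4 * of_real a2 * k^3)"
  by (simp add: trace_def sum_3 Tadj_def Let_def Umat_def mcnj_def msc_def sigma_def
      matrix_matrix_mult_def mat_def algebra_simps power2_eq_square power3_eq_cube)

theorem proposition3:
  fixes uo a1 a2 :: real and z k lam :: complex
    and u ux uxx :: "real \<Rightarrow> real \<Rightarrow> complex^2"
    and \<nu>1 \<nu>2 \<nu> :: "real \<Rightarrow> real \<Rightarrow> complex^3"
  assumes uo_pos: "uo > 0"
    and z_nz: "z \<noteq> 0"
    and u_x: "\<And>x t. ((\<lambda>y. u y t) has_vector_derivative ux x t) (at x)"
    and u_xx: "\<And>x t. ((\<lambda>y. ux y t) has_vector_derivative uxx x t) (at x)"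
    and k_def: "k = (z - of_real (uo^2) / z) / 2"
    and lam_def: "lam = (z + of_real (uo^2) / z) / 2"
    and nu1_x: "\<And>x t. ((\<lambda>y. \<nu>1 y t) has_vector_derivative
                   (Xadj k (Umat (u x t)) *v \<nu>1 x t)) (at x)"
    and nu1_t: "\<And>x t. ((\<lambda>s. \<nu>1 x s) has_vector_derivative
                   (Tadj a1 a2 uo k (Umat (u x t)) (Umat (ux x t)) (Umat (uxx x t)) *v \<nu>1 x t)) (at t)"
    and nu2_x: "\<And>x t. ((\<lambda>y. \<nu>2 y t) has_vector_derivative
                   (Xadj k (Umat (u x t)) *v \<nu>2 x t)) (at x)"
    and nu2_t: "\<And>x t. ((\<lambda>s. \<nu>2 x s) has_vector_derivative
                   (Tadj a1 a2 uo k (Umat (u x t)) (Umat (ux x t)) (Umat (uxx x t)) *v \<nu>2 x t)) (at t)"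
    and nu_def: "\<And>x t. \<nu> x t = vsc (exp (\<i> * h2 a1 a2 k lam x t)) (ccross (\<nu>1 x t) (\<nu>2 x t))"
  shows "(\<forall>x t. ((\<lambda>y. \<nu> y t) has_vector_derivative (Xmat k (Umat (u x t)) *v \<nu> x t)) (at x)) \<and>
         (\<forall>x t. ((\<lambda>s. \<nu> x s) has_vector_derivative
                   (Tmat a1 a2 uo k (Umat (u x t)) (Umat (ux x t)) (Umat (uxx x t)) *v \<nu> x t)) (at t))"
proof (intro conjI allI)
  have lam_sq: "lam^2 = k^2 + of_real (uo^2)"
    unfolding k_def lam_def using z_nz by (simp add: field_simps power2_eq_square)
  fix x t
  show "((\<lambda>y. \<nu> y t) has_vector_derivative (Xmat k (Umat (u x t)) *v \<nu> x t)) (at x)"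
    unfolding nu_def Xmat_eq_neg_transpose_Xadj
    by (rule has_vector_derivative_phase_ccross[OF _ nu1_x nu2_x])
      (simp add: trace_Xadj has_vector_derivative_exp_h2_x)
  show "((\<lambda>s. \<nu> x s) has_vector_derivative
          (Tmat a1 a2 uo k (Umat (u x t)) (Umat (ux x t)) (Umat (uxx x t)) *v \<nu> x t)) (at t)"
    unfolding nu_def Tmat_eq_neg_transpose_Tadj
    by (rule has_vector_derivative_phase_ccross[OF _ nu1_t nu2_t])
      (use has_vector_derivative_exp_h2_t[of a1 a2 k lam x t] in \<open>simp add: trace_Tadj lam_sq algebra_simps\<close>)
qed

end
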